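(* Let $k\ge 3$ and $1\le t\le k-1$ be integers. Then there exists a $t$-intersecting family $\mathcal{F}\subset\binom{[2k-t+1]}{k}$ such that $$\bigcup_{j=0}^{k-t}\binom{[2k-2t+2]}{j}\subset\mathcal{D}(\mathcal{F}).$$
   Context: $[m]=\{1,\dots,m\}$; $\binom{S}{j}$ is the family of all $j$-element subsets of $S$. For a family $\mathcal{F}$ of sets, $\mathcal{D}(\mathcal{F})=\{F\setminus F' : F,F'\in\mathcal{F}\}$. A family $\mathcal{F}$ is $t$-intersecting if $|F\cap F'|\ge t$ for all $F,F'\in\mathcal{F}$. *)

theory Defs
  imports Main
begin

definition binom_sets :: "'a set \<Rightarrow> nat \<Rightarrow> 'a set set" where
  "binom_sets S j = {A. A \<subseteq> S \<and> card A = j}"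

definition diff_family :: "'a set set \<Rightarrow> 'a set set" where
  "diff_family \<F> = {F - F' | F F'. F \<in> \<F> \<and> F' \<in> \<F>}"

definition t_intersecting :: "nat \<Rightarrow> 'a set set \<Rightarrow> bool" where
  "t_intersecting t \<F> \<longleftrightarrow> (\<forall>F\<in>\<F>. \<forall>F'\<in>\<F>. card (F \<inter> F') \<ge> t)"

end

theory Submission
  imports Defs
begin

text \<open>For t \<ge> 2 take all k-subsets of [2k - t]: two of them meet in at least t points, and a set
  D of at most k - t points is (D \<union> A) - (A \<union> R) for disjoint A, R outside D.

  For t = 1 a family of k-subsets of [2k] is intersecting as soon as it contains no complementary
  pair. For odd k split [2k] into halves W and [2k] - W and take the k-sets meeting W in an odd
  number of points: complementation flips this parity, and the parities can be arranged
  independently on the two sets of a difference. For even k write [2k] = U \<union> {a, b} with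
  |U| = 2(k - 1), split U into halves in the same way, and take a k-set containing exactly one
  of a, b if it meets W oddly, one containing both if its trace on U is chosen, and one
  containing neither if its complement in U is not chosen. The selection rule on
  (k - 2)-subsets of U has to take both values above every smaller set, and to disagree with the
  parity of W after deleting a suitable point from any (k - 1)-subset of U.\<close>

lemma obtain_disjoint_subsets_with_card:
  assumes "finite X" "p + q \<le> card X"
  obtains A B where "A \<subseteq> X" "B \<subseteq> X" "A \<inter> B = {}" "card A = p" "card B = q"
proof -
  obtain A where A: "A \<subseteq> X" "card A = p"
    using obtain_subset_with_card_n[of p X] assms by auto
  have "q \<le> card (X - A)"
    using A assms by (simp add: card_Diff_subset finite_subset)
  then obtain B where "B \<subseteq> X - A" "card B = q"
    using obtain_subset_with_card_n[of q "X - A"] by auto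
  with A show thesis using that[of A B] by blast
qed

lemma t_intersecting_binom_sets:
  assumes "finite V"
  shows "t_intersecting (2*k - card V) (binom_sets V k)"
  unfolding t_intersecting_def
proof (intro ballI)
  fix F F' assume "F \<in> binom_sets V k" "F' \<in> binom_sets V k"
  then have F: "F \<subseteq> V" "F' \<subseteq> V" "card F = k" "card F' = k"
    unfolding binom_sets_def by auto
  then have "card (F \<union> F') + card (F \<inter> F') = 2*k"
    using card_Un_Int[of F F'] assms by (simp add: finite_subset)
  moreover have "card (F \<union> F') \<le> card V"
    using F assms by (intro card_mono) auto
  ultimately show "2*k - card V \<le> card (F \<inter> F')" by linarith
qed

lemma binom_sets_subset_diff_family:
  assumes "finite V" "j \<le> k" "j + k \<le> card V"
  shows "binom_sets V j \<subseteq> diff_family (binom_sets V k)"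
proof
  fix D assume "D \<in> binom_sets V j"
  then have D: "D \<subseteq> V" "card D = j" unfolding binom_sets_def by auto
  have room: "(k - j) + j \<le> card (V - D)"
    using D assms by (simp add: card_Diff_subset finite_subset)
  obtain A R where AR: "A \<subseteq> V - D" "R \<subseteq> V - D" "A \<inter> R = {}" "card A = k - j" "card R = j"
    by (rule obtain_disjoint_subsets_with_card[OF _ room]) (simp add: assms(1))
  have fin: "finite D" "finite A" "finite R"
    using D(1) AR(1,2) assms(1) by (auto intro: finite_subset)
  have "card (D \<union> A) = k" "card (A \<union> R) = k"
    using AR fin D assms(2) by (subst card_Un_disjoint; auto)+
  then have "D \<union> A \<in> binom_sets V k" "A \<union> R \<in> binom_sets V k"
    using AR D unfolding binom_sets_def by auto
  moreover have "D = (D \<union> A) - (A \<union> R)" using AR by auto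
  ultimately show "D \<in> diff_family (binom_sets V k)" unfolding diff_family_def by blast
qed

definition complement_free :: "'a set \<Rightarrow> 'a set set \<Rightarrow> bool" where
  "complement_free U \<F> \<longleftrightarrow> (\<forall>F\<in>\<F>. U - F \<notin> \<F>)"

lemma t_intersecting_if_complement_free:
  assumes "finite U" "card U = 2*k" "\<F> \<subseteq> binom_sets U k" "complement_free U \<F>"
  shows "t_intersecting 1 \<F>"
  unfolding t_intersecting_def
proof (intro ballI)
  fix F F' assume in_F: "F \<in> \<F>" "F' \<in> \<F>"
  then have F: "F \<subseteq> U" "F' \<subseteq> U" "card F = k" "card F' = k"
    using assms(3) unfolding binom_sets_def by auto
  have fin: "finite F" "finite F'" using F assms(1) finite_subset by blast+
  show "1 \<le> card (F \<inter> F')"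
  proof (rule ccontr)
    assume "\<not> 1 \<le> card (F \<inter> F')"
    then have "card (F \<inter> F') = 0" by simp
    then have "F \<inter> F' = {}" using fin by simp
    then have "card (F \<union> F') = card U" using F fin assms(2) by (simp add: card_Un_disjoint)
    then have "F \<union> F' = U" using F assms(1) by (simp add: card_subset_eq)
    with \<open>F \<inter> F' = {}\<close> have "F' = U - F" by blast
    with in_F assms(4) show False unfolding complement_free_def by blast
  qed
qed

lemma odd_parity_split:
  fixes k d1 d2 :: nat
  assumes "odd k" "d1 + d2 < k"
  obtains a1 r1 a2 r2 where "a1 + r1 \<le> k - d1" "a2 + r2 \<le> k - d2"
    "odd (d1 + a1)" "odd (a1 + r1)" "d1 + d2 + a1 + a2 = k" "r1 + r2 = d1 + d2"
proof -
  define a1 where "a1 = (if even d1 then 1 else (0::nat))"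
  define r1 where "r1 = (if odd d2 then d2 else d2 + 1) - a1"
  show thesis
    by (rule that[of a1 r1 "k - (d1 + d2) - a1" "d1 + d2 - r1"])
      (use assms in \<open>auto simp: a1_def r1_def split: if_splits elim: oddE\<close>)
qed

locale odd_halves =
  fixes U W :: "'a set" and k :: nat
  assumes finite_U: "finite U" and W_subset: "W \<subseteq> U"
    and card_W: "card W = k" and card_U_minus_W: "card (U - W) = k" and odd_k: "odd k"
begin

lemma finite_W: "finite W"
  using W_subset finite_U finite_subset by blast

lemma card_U: "card U = 2*k"
  using card_Diff_subset[OF finite_W W_subset] card_mono[OF finite_U W_subset]
    card_U_minus_W card_W by linarith

lemma card_Int_W_complement:
  assumes "F \<subseteq> U"
  shows "card ((U - F) \<inter> W) = k - card (F \<inter> W)"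
proof -
  have "(U - F) \<inter> W = W - F \<inter> W" using W_subset by auto
  then show ?thesis using finite_W card_W by (simp add: card_Diff_subset)
qed

definition odd_family :: "'a set set" where
  "odd_family = {F \<in> binom_sets U k. odd (card (F \<inter> W))}"

lemma odd_family_complement_free: "complement_free U odd_family"
  unfolding complement_free_def
proof (intro ballI notI)
  fix F assume "F \<in> odd_family" "U - F \<in> odd_family"
  then have "F \<subseteq> U" "odd (card (F \<inter> W))" "odd (card ((U - F) \<inter> W))"
    unfolding odd_family_def binom_sets_def by auto
  moreover have "card (F \<inter> W) \<le> k"
    using card_mono[OF finite_W, of "F \<inter> W"] card_W by auto
  ultimately show False using card_Int_W_complement[of F] odd_k by presburger
qed

text \<open>F1 = D \<union> A and F2 = A \<union> R with A and R split between W and U - W: the part of A in W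
  fixes the parity of F1 \<inter> W, and then the part of R in W fixes that of F2 \<inter> W.\<close>
lemma odd_family_diff_cover:
  assumes D: "D \<subseteq> U" "card D < k"
  shows "D \<in> diff_family odd_family"
proof -
  have fD: "finite D" using D finite_U finite_subset by blast
  define d1 where "d1 = card (D \<inter> W)"
  define d2 where "d2 = card (D - W)"
  have card_D: "card D = d1 + d2" unfolding d1_def d2_def using card_Int_Diff[OF fD] by simp
  have room_W: "card (W - D) = k - d1"
    using card_W finite_W by (simp add: card_Diff_subset_Int d1_def Int_commute)
  have room_Y: "card ((U - W) - D) = k - d2"
  proof -
    have "(U - W) \<inter> D = D - W" using D by auto
    then show ?thesis using card_U_minus_W finite_U fD card_Diff_subset_Int[of "U - W" D] d2_def by simp
  qed
  have "d1 + d2 < k" using D(2) card_D by simp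
  then obtain a1 r1 a2 r2 where counts: "a1 + r1 \<le> k - d1" "a2 + r2 \<le> k - d2"
      "odd (d1 + a1)" "odd (a1 + r1)" "d1 + d2 + a1 + a2 = k" "r1 + r2 = d1 + d2"
    by (rule odd_parity_split[OF odd_k])
  obtain A1 R1 where AR1: "A1 \<subseteq> W - D" "R1 \<subseteq> W - D" "A1 \<inter> R1 = {}" "card A1 = a1" "card R1 = r1"
    by (rule obtain_disjoint_subsets_with_card[of "W - D" a1 r1]) (use counts(1) room_W finite_W in auto)
  obtain A2 R2 where AR2: "A2 \<subseteq> (U - W) - D" "R2 \<subseteq> (U - W) - D" "A2 \<inter> R2 = {}"
      "card A2 = a2" "card R2 = r2"
    by (rule obtain_disjoint_subsets_with_card[of "(U - W) - D" a2 r2]) (use counts(2) room_Y finite_U in auto)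
  have fin: "finite A1" "finite A2" "finite R1" "finite R2"
    using AR1 AR2 finite_W finite_U finite_subset by (meson finite_Diff)+
  define F1 where "F1 = D \<union> A1 \<union> A2"
  define F2 where "F2 = A1 \<union> A2 \<union> R1 \<union> R2"
  have "F1 \<inter> W = (D \<inter> W) \<union> A1" "F2 \<inter> W = A1 \<union> R1"
    using AR1 AR2 unfolding F1_def F2_def by auto
  moreover have "card ((D \<inter> W) \<union> A1) = d1 + a1" "card (A1 \<union> R1) = a1 + r1"
    using AR1 fin fD unfolding d1_def by (subst card_Un_disjoint; auto)+
  ultimately have parity: "odd (card (F1 \<inter> W))" "odd (card (F2 \<inter> W))"
    using counts(3,4) by simp_all
  have "card (D \<union> A1) = card D + a1" "card (A1 \<union> A2) = a1 + a2"
    using AR1 AR2 fin fD by (subst card_Un_disjoint; auto)+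
  then have "card F1 = card D + a1 + a2" "card (A1 \<union> A2 \<union> R1) = a1 + a2 + r1"
    using AR1 AR2 fin fD unfolding F1_def by (subst card_Un_disjoint; auto)+
  moreover from this(2) have "card F2 = a1 + a2 + r1 + r2"
    using AR1 AR2 fin unfolding F2_def by (subst card_Un_disjoint; auto)
  ultimately have "card F1 = k" "card F2 = k"
    using counts(5,6) card_D by linarith+
  moreover have "F1 \<subseteq> U" "F2 \<subseteq> U" "F1 - F2 = D"
    using AR1 AR2 D W_subset unfolding F1_def F2_def by auto
  ultimately have "F1 \<in> odd_family" "F2 \<in> odd_family"
    using parity unfolding odd_family_def binom_sets_def by auto
  with \<open>F1 - F2 = D\<close> show ?thesis unfolding diff_family_def by blast
qed

end

lemma card_Int_singleton_le: "card (S \<inter> {x}) \<le> 1"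
  using card_mono[of "{x}" "S \<inter> {x}"] by auto

lemma mem_iff_card_Int_singleton: "x \<in> S \<longleftrightarrow> card (S \<inter> {x}) = 1"
  by (cases "x \<in> S") auto

lemma card_Diff_singleton_Int:
  assumes "finite S" "y \<in> S"
  shows "card ((S - {y}) \<inter> X) = card (S \<inter> X) - (if y \<in> X then 1 else 0)"
proof -
  have "(S - {y}) \<inter> X = (S \<inter> X) - {y}" by auto
  then show ?thesis using assms by (auto simp: card_Diff_singleton_if)
qed

definition parity_rule :: "nat \<Rightarrow> nat \<Rightarrow> bool \<Rightarrow> bool" where
  "parity_rule w r z \<longleftrightarrow> (even r \<noteq> (w \<le> 1 \<and> \<not> z))"

text \<open>In the application, d1, d2, d3, d4 count the points of a set D in the four blocks
  {w0}, W - {w0}, {z0}, (U - W) - {z0}, and m is the number of points to be added to D.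
  Adding m - x points of W - {w0}, x points of the last block, and alternatively y points of
  W - {w0}, m - y - ez of the last block and (if ez = 1) z0, the rule takes both values.\<close>
lemma parity_rule_both_values:
  fixes k d1 d2 d3 d4 m :: nat
  assumes "odd k" "k \<ge> 3" "d1 \<le> 1" "d3 \<le> 1" "d1+d2+d3+d4 \<le> k - 2"
    and m: "m = k - 1 - (d1+d2+d3+d4)"
  shows "\<exists>x y ez. ez \<le> 1 \<and> x \<le> m \<and> y + ez \<le> m \<and> (ez = 1 \<longrightarrow> d3 = 0)
     \<and> (m - x) + y \<le> k - 1 - d2 \<and> x + (m - y - ez) \<le> k - 1 - d4
     \<and> parity_rule (d1+d2+(m-x)) (d2+(m-x)) (d3=1) \<noteq> parity_rule (d1+d2+y) (d2+y) (d3=1 \<or> ez = 1)"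
proof -
  have m1: "m \<ge> 1" using assms by simp
  have c2: "k - 1 - d2 = m + d1 + d3 + d4" and c4: "k - 1 - d4 = m + d1 + d2 + d3"
    using assms by auto
  show ?thesis
  proof (cases "even m")
    case True
    show ?thesis
    proof (cases "d3 = 1")
      case True
      with \<open>even m\<close> m1 show ?thesis unfolding c2 c4
        by (intro exI[of _ 1] exI[of _ 0] exI[of _ 0]) (auto simp: parity_rule_def)
    next
      case d3: False
      show ?thesis
      proof (cases "d1 + d2 = 0")
        case True
        with \<open>even m\<close> m1 d3 assms(4) show ?thesis unfolding c2 c4
          by (intro exI[of _ 0] exI[of _ 0] exI[of _ 0]) (auto simp: parity_rule_def)
      next
        case False
        with \<open>even m\<close> m1 d3 assms(4) show ?thesis unfolding c2 c4
          by (intro exI[of _ 1] exI[of _ 0] exI[of _ 1]) (auto simp: parity_rule_def)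
      qed
    qed
  next
    case False
    then have om: "odd m" by simp
    show ?thesis
    proof (cases "d3 = 1 \<or> d1 + d2 \<ge> 2")
      case True
      with om m1 show ?thesis unfolding c2 c4
        by (intro exI[of _ 0] exI[of _ 0] exI[of _ 0]) (auto simp: parity_rule_def)
    next
      case F: False
      then have d3: "d3 = 0" using assms(4) by auto
      show ?thesis
      proof (cases "d1 + d2 = 1 \<or> m \<ge> 3")
        case True
        with om m1 d3 F show ?thesis unfolding c2 c4
          by (intro exI[of _ 0] exI[of _ 0] exI[of _ 1]) (auto simp: parity_rule_def)
      next
        case False
        then have "d1 = 0" "d2 = 0" using F by auto
        have "m = 1" using False om m1 by presburger
        with d3 \<open>d1 = 0\<close> \<open>d2 = 0\<close> show ?thesis unfolding c2 c4
          by (intro exI[of _ 0] exI[of _ 0] exI[of _ 0]) (auto simp: parity_rule_def)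
      qed
    qed
  qed
qed

text \<open>Same block counts e1, ..., e4 for a set E of size k; each disjunct says that deleting a point
  from the corresponding block moves the rule away from the parity of e1 + e2.\<close>
lemma parity_rule_deletion:
  fixes k e1 e2 e3 e4 :: nat
  assumes "odd k" "k \<ge> 3" "e1 \<le> 1" "e3 \<le> 1" "e1+e2+e3+e4 = k" "e2 \<le> k - 1" "e4 \<le> k - 1"
  shows "(e1 = 1 \<and> parity_rule (e1+e2-1) e2 (e3=1) \<noteq> odd (e1+e2)) \<or>
         (e2 \<ge> 1 \<and> parity_rule (e1+e2-1) (e2-1) (e3=1) \<noteq> odd (e1+e2)) \<or>
         (e3 = 1 \<and> parity_rule (e1+e2) e2 False \<noteq> odd (e1+e2)) \<or>
         (e4 \<ge> 1 \<and> parity_rule (e1+e2) e2 (e3=1) \<noteq> odd (e1+e2))"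
proof (cases "e1 = 1")
  case e1: True
  show ?thesis
  proof (cases "e2 \<ge> 2")
    case True then show ?thesis using e1 by (auto simp: parity_rule_def)
  next
    case False
    then consider "e2 = 0" | "e2 = 1" by linarith
    then show ?thesis using e1 assms(4) by cases (auto simp: parity_rule_def)
  qed
next
  case e1: False
  then have e10: "e1 = 0" using assms(3) by simp
  show ?thesis
  proof (cases "e3 = 1")
    case e3: True
    show ?thesis
    proof (cases "e2 \<ge> 2")
      case True then show ?thesis using e10 e3 by (auto simp: parity_rule_def)
    next
      case False
      then consider "e2 = 0" | "e2 = 1" by linarith
      then show ?thesis using e10 e3 assms by cases (auto simp: parity_rule_def)
    qed
  next
    case False
    then have e30: "e3 = 0" using assms(4) by simp
    show ?thesis
    proof (cases "e2 \<ge> 2")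
      case True then show ?thesis using e10 e30 assms by (auto simp: parity_rule_def)
    next
      case False
      then consider "e2 = 0" | "e2 = 1" by linarith
      then show ?thesis using e10 e30 assms by cases (auto simp: parity_rule_def)
    qed
  qed
qed

locale even_extension = odd_halves +
  fixes w0 z0 a b :: 'a
  assumes w0_in_W: "w0 \<in> W" and z0_in: "z0 \<in> U - W" and k_ge_3: "3 \<le> k"
    and a_notin_U: "a \<notin> U" and b_notin_U: "b \<notin> U" and a_neq_b: "a \<noteq> b"
begin

definition W' :: "'a set" where "W' = W - {w0}"
definition Y' :: "'a set" where "Y' = U - W - {z0}"

definition chosen :: "'a set \<Rightarrow> bool" where
  "chosen S \<longleftrightarrow> parity_rule (card (S \<inter> W)) (card (S \<inter> W')) (z0 \<in> S)"

definition good :: "'a set \<Rightarrow> bool" where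
  "good F \<longleftrightarrow> (if (a \<in> F) = (b \<in> F) then (if a \<in> F then chosen (F \<inter> U) else \<not> chosen (U - F))
     else odd (card (F \<inter> W)))"

definition even_family :: "'a set set" where
  "even_family = {F \<in> binom_sets (U \<union> {a, b}) (k + 1). good F}"

lemma W'_subset: "W' \<subseteq> W" and Y'_subset: "Y' \<subseteq> U - W" and z0_notin: "z0 \<notin> W'" "z0 \<notin> Y'"
  unfolding W'_def Y'_def using z0_in by auto

lemma card_W': "card W' = k - 1"
  unfolding W'_def using card_W w0_in_W finite_W by simp

lemma card_Y': "card Y' = k - 1"
  unfolding Y'_def using z0_in card_U_minus_W finite_U by simp

lemma finite_W': "finite W'" and finite_Y': "finite Y'"
  unfolding W'_def Y'_def using finite_W finite_U by auto

lemma card_Int_W_split: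
  assumes "finite S"
  shows "card (S \<inter> W) = card (S \<inter> {w0}) + card (S \<inter> W')"
proof -
  have "S \<inter> W = (S \<inter> {w0}) \<union> (S \<inter> W')" using w0_in_W unfolding W'_def by auto
  moreover have "card ((S \<inter> {w0}) \<union> (S \<inter> W')) = card (S \<inter> {w0}) + card (S \<inter> W')"
    using assms unfolding W'_def by (intro card_Un_disjoint) auto
  ultimately show ?thesis by simp
qed

lemma card_split:
  assumes "S \<subseteq> U"
  shows "card S = card (S \<inter> W) + card (S \<inter> {z0}) + card (S \<inter> Y')"
proof -
  have fS: "finite S" using assms finite_U finite_subset by blast
  have "S = (S \<inter> W) \<union> ((S \<inter> {z0}) \<union> (S \<inter> Y'))" using assms unfolding Y'_def by auto
  moreover have "card ((S \<inter> {z0}) \<union> (S \<inter> Y')) = card (S \<inter> {z0}) + card (S \<inter> Y')"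
    using fS z0_notin by (intro card_Un_disjoint) auto
  moreover have "card ((S \<inter> W) \<union> ((S \<inter> {z0}) \<union> (S \<inter> Y'))) = card (S \<inter> W) + card ((S \<inter> {z0}) \<union> (S \<inter> Y'))"
    using fS z0_in Y'_subset by (intro card_Un_disjoint) auto
  ultimately show ?thesis by simp
qed

lemma obtain_disjoint_extensions:
  assumes D: "D \<subseteq> U" and room_W': "p + q \<le> card (W' - D)" and room_Y': "p' + q' \<le> card (Y' - D)"
    and z: "z \<longrightarrow> z0 \<notin> D"
  obtains A E where "A \<subseteq> U - D" "E \<subseteq> U - D" "A \<inter> E = {}"
    "card A = p + p'" "card E = q + q' + (if z then 1 else 0)"
    "card ((D \<union> A) \<inter> W) = card (D \<inter> W) + p" "card ((D \<union> A) \<inter> W') = card (D \<inter> W') + p"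
    "z0 \<in> D \<union> A \<longleftrightarrow> z0 \<in> D"
    "card ((D \<union> E) \<inter> W) = card (D \<inter> W) + q" "card ((D \<union> E) \<inter> W') = card (D \<inter> W') + q"
    "z0 \<in> D \<union> E \<longleftrightarrow> z0 \<in> D \<or> z"
proof -
  have fD: "finite D" using D finite_U finite_subset by blast
  obtain A2 E2 where P2: "A2 \<subseteq> W' - D" "E2 \<subseteq> W' - D" "A2 \<inter> E2 = {}" "card A2 = p" "card E2 = q"
    by (rule obtain_disjoint_subsets_with_card[OF _ room_W']) (use finite_W' in simp)
  obtain A4 E4 where P4: "A4 \<subseteq> Y' - D" "E4 \<subseteq> Y' - D" "A4 \<inter> E4 = {}" "card A4 = p'" "card E4 = q'"
    by (rule obtain_disjoint_subsets_with_card[OF _ room_Y']) (use finite_Y' in simp)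
  have fin: "finite A2" "finite E2" "finite A4" "finite E4"
    using P2(1,2) P4(1,2) finite_W' finite_Y' finite_subset by blast+
  have blocks: "W' \<inter> Y' = {}" "W' \<subseteq> W" "Y' \<inter> W = {}" "W' \<subseteq> U" "Y' \<subseteq> U"
    using W'_subset Y'_subset W_subset by auto
  define Z where "Z = (if z then {z0} else {})"
  define A where "A = A2 \<union> A4"
  define E where "E = E2 \<union> E4 \<union> Z"
  have "A \<subseteq> U - D" "E \<subseteq> U - D" "A \<inter> E = {}"
    unfolding A_def E_def Z_def using P2 P4 blocks z z0_in z0_notin by auto
  moreover have "card A = p + p'"
    unfolding A_def using P2 P4 fin blocks by (subst card_Un_disjoint) auto
  moreover have "card E = q + q' + (if z then 1 else 0)"
  proof -
    have "card (E2 \<union> E4) = q + q'" using P2 P4 fin blocks by (subst card_Un_disjoint) auto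
    moreover have "card (E2 \<union> E4 \<union> Z) = card (E2 \<union> E4) + card Z"
      using P2 P4 fin z0_notin unfolding Z_def by (intro card_Un_disjoint) auto
    ultimately show ?thesis unfolding E_def Z_def by simp
  qed
  moreover have "(D \<union> A) \<inter> W = (D \<inter> W) \<union> A2" "(D \<union> A) \<inter> W' = (D \<inter> W') \<union> A2"
    "(D \<union> E) \<inter> W = (D \<inter> W) \<union> E2" "(D \<union> E) \<inter> W' = (D \<inter> W') \<union> E2"
    unfolding A_def E_def Z_def using P2 P4 blocks z0_in z0_notin by auto
  moreover have "card ((D \<inter> W) \<union> A2) = card (D \<inter> W) + p" "card ((D \<inter> W') \<union> A2) = card (D \<inter> W') + p"
    "card ((D \<inter> W) \<union> E2) = card (D \<inter> W) + q" "card ((D \<inter> W') \<union> E2) = card (D \<inter> W') + q"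
    using P2 fin fD by (subst card_Un_disjoint; auto)+
  moreover have "z0 \<in> D \<union> A \<longleftrightarrow> z0 \<in> D" "z0 \<in> D \<union> E \<longleftrightarrow> z0 \<in> D \<or> z"
    unfolding A_def E_def Z_def using P2 P4 z0_notin by auto
  ultimately show thesis using that[of A E] by presburger
qed

lemma chosen_both_ways:
  assumes D: "D \<subseteq> U" and card_D: "card D \<le> k - 2"
  obtains A E where "A \<subseteq> U - D" "E \<subseteq> U - D" "A \<inter> E = {}"
    "card A = k - 1 - card D" "card E = k - 1 - card D" "chosen (D \<union> A)" "\<not> chosen (D \<union> E)"
proof -
  have fD: "finite D" using D finite_U finite_subset by blast
  define d1 where "d1 = card (D \<inter> {w0})"
  define d2 where "d2 = card (D \<inter> W')"
  define d3 where "d3 = card (D \<inter> {z0})"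
  define d4 where "d4 = card (D \<inter> Y')"
  have d1: "d1 \<le> 1" and d3: "d3 \<le> 1" unfolding d1_def d3_def by (rule card_Int_singleton_le)+
  have D_W: "card (D \<inter> W) = d1 + d2" unfolding d1_def d2_def using card_Int_W_split[OF fD] .
  have D_sum: "card D = d1 + d2 + d3 + d4" using card_split[OF D] D_W d3_def d4_def by simp
  have z0_D: "z0 \<in> D \<longleftrightarrow> d3 = 1" unfolding d3_def by (rule mem_iff_card_Int_singleton)
  have room_W': "card (W' - D) = k - 1 - d2"
    using card_Diff_subset_Int[of W' D] finite_W' card_W' d2_def by (simp add: Int_commute)
  have room_Y': "card (Y' - D) = k - 1 - d4"
    using card_Diff_subset_Int[of Y' D] finite_Y' card_Y' d4_def by (simp add: Int_commute)
  define m where "m = k - 1 - (d1 + d2 + d3 + d4)"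
  have "d1 + d2 + d3 + d4 \<le> k - 2" using card_D D_sum by simp
  then obtain x y ez where xy: "ez \<le> 1" "x \<le> m" "y + ez \<le> m" "ez = 1 \<longrightarrow> d3 = 0"
     "(m - x) + y \<le> k - 1 - d2" "x + (m - y - ez) \<le> k - 1 - d4"
     "parity_rule (d1+d2+(m-x)) (d2+(m-x)) (d3=1) \<noteq> parity_rule (d1+d2+y) (d2+y) (d3=1 \<or> ez = 1)"
    using parity_rule_both_values[OF odd_k k_ge_3 d1 d3 _ m_def] by blast
  obtain A E where AE: "A \<subseteq> U - D" "E \<subseteq> U - D" "A \<inter> E = {}" "card A = (m - x) + x"
      "card E = y + (m - y - ez) + (if ez = 1 then 1 else 0)"
      "card ((D \<union> A) \<inter> W) = card (D \<inter> W) + (m - x)" "card ((D \<union> A) \<inter> W') = card (D \<inter> W') + (m - x)"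
      "z0 \<in> D \<union> A \<longleftrightarrow> z0 \<in> D"
      "card ((D \<union> E) \<inter> W) = card (D \<inter> W) + y" "card ((D \<union> E) \<inter> W') = card (D \<inter> W') + y"
      "z0 \<in> D \<union> E \<longleftrightarrow> z0 \<in> D \<or> ez = 1"
    by (rule obtain_disjoint_extensions[OF D, of "m - x" y x "m - y - ez" "ez = 1"])
      (use xy(4,5,6) room_W' room_Y' z0_D in simp_all)
  have sizes: "card A = k - 1 - card D" "card E = k - 1 - card D"
    using AE(4,5) xy(1,2,3) D_sum m_def by auto
  have differ: "chosen (D \<union> A) \<noteq> chosen (D \<union> E)"
    using xy(7) unfolding chosen_def AE(6-11) D_W d2_def[symmetric] z0_D by simp
  show thesis
  proof (cases "chosen (D \<union> A)")
    case True
    with differ show thesis using that[OF AE(1-3) sizes] by simp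
  next
    case False
    with differ show thesis using that[OF AE(2,1) _ sizes(2,1)] AE(3) by (simp add: Int_commute)
  qed
qed

lemma chosen_Diff_singleton:
  assumes "S \<subseteq> U" "y \<in> S"
  shows "chosen (S - {y}) = parity_rule (card (S \<inter> W) - (if y \<in> W then 1 else 0))
    (card (S \<inter> W') - (if y \<in> W' then 1 else 0)) (z0 \<in> S \<and> z0 \<noteq> y)"
proof -
  have "finite S" using assms(1) finite_U finite_subset by blast
  from card_Diff_singleton_Int[OF this assms(2)] show ?thesis unfolding chosen_def by auto
qed

lemma chosen_deletion:
  assumes E: "E \<subseteq> U" and card_E: "card E = k"
  obtains y where "y \<in> E" "chosen (E - {y}) \<noteq> odd (card (E \<inter> W))"
proof -
  have fE: "finite E" using E finite_U finite_subset by blast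
  define e1 where "e1 = card (E \<inter> {w0})"
  define e2 where "e2 = card (E \<inter> W')"
  define e3 where "e3 = card (E \<inter> {z0})"
  define e4 where "e4 = card (E \<inter> Y')"
  have e1: "e1 \<le> 1" and e3: "e3 \<le> 1" unfolding e1_def e3_def by (rule card_Int_singleton_le)+
  have E_W: "card (E \<inter> W) = e1 + e2" unfolding e1_def e2_def using card_Int_W_split[OF fE] .
  have E_sum: "e1 + e2 + e3 + e4 = k" using card_split[OF E] E_W e3_def e4_def card_E by simp
  have z0_E: "z0 \<in> E \<longleftrightarrow> e3 = 1" unfolding e3_def by (rule mem_iff_card_Int_singleton)
  have e2: "e2 \<le> k - 1" unfolding e2_def using card_mono[OF finite_W', of "E \<inter> W'"] card_W' by auto
  have e4: "e4 \<le> k - 1" unfolding e4_def using card_mono[OF finite_Y', of "E \<inter> Y'"] card_Y' by auto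
  have points: "w0 \<notin> W'" "w0 \<notin> Y'" "w0 \<noteq> z0" "z0 \<notin> W"
    unfolding W'_def Y'_def using w0_in_W z0_in by auto
  from parity_rule_deletion[OF odd_k k_ge_3 e1 e3 E_sum e2 e4]
  consider (w0) "e1 = 1" "parity_rule (e1+e2-1) e2 (e3=1) \<noteq> odd (e1+e2)"
    | (W') "e2 \<ge> 1" "parity_rule (e1+e2-1) (e2-1) (e3=1) \<noteq> odd (e1+e2)"
    | (z0) "e3 = 1" "parity_rule (e1+e2) e2 False \<noteq> odd (e1+e2)"
    | (Y') "e4 \<ge> 1" "parity_rule (e1+e2) e2 (e3=1) \<noteq> odd (e1+e2)" by blast
  then show thesis
  proof cases
    case w0
    then have y: "w0 \<in> E" unfolding e1_def by (cases "w0 \<in> E") auto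
    then have "chosen (E - {w0}) = parity_rule (e1+e2-1) e2 (e3=1)"
      using chosen_Diff_singleton[OF E y] points w0_in_W z0_E E_W e2_def by simp
    with w0(2) show thesis using that[OF y] E_W by simp
  next
    case W'
    then have "E \<inter> W' \<noteq> {}" unfolding e2_def by auto
    then obtain y where y: "y \<in> E" "y \<in> W'" by blast
    then have "y \<in> W" "y \<noteq> z0" using W'_subset z0_notin by auto
    then have "chosen (E - {y}) = parity_rule (e1+e2-1) (e2-1) (e3=1)"
      using chosen_Diff_singleton[OF E y(1)] y(2) z0_E E_W e2_def by simp
    with W'(2) show thesis using that[OF y(1)] E_W by simp
  next
    case z0
    then have y: "z0 \<in> E" using z0_E by simp
    then have "chosen (E - {z0}) = parity_rule (e1+e2) e2 False"
      using chosen_Diff_singleton[OF E y] points z0_notin E_W e2_def by simp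
    with z0(2) show thesis using that[OF y] E_W by simp
  next
    case Y'
    then have "E \<inter> Y' \<noteq> {}" unfolding e4_def by auto
    then obtain y where y: "y \<in> E" "y \<in> Y'" by blast
    then have "y \<notin> W" "y \<notin> W'" "y \<noteq> z0" using Y'_subset W'_subset z0_notin by auto
    then have "chosen (E - {y}) = parity_rule (e1+e2) e2 (e3=1)"
      using chosen_Diff_singleton[OF E y(1)] z0_E E_W e2_def by simp
    with Y'(2) show thesis using that[OF y(1)] E_W by simp
  qed
qed

lemma good_insert:
  assumes "S \<subseteq> U" "x \<in> {a, b}"
  shows "good (insert x S) \<longleftrightarrow> odd (card (S \<inter> W))"
proof -
  have "(a \<in> insert x S) \<noteq> (b \<in> insert x S)"
    using assms a_notin_U b_notin_U a_neq_b by auto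
  moreover have "insert x S \<inter> W = S \<inter> W"
    using assms a_notin_U b_notin_U W_subset by auto
  ultimately show ?thesis unfolding good_def by simp
qed

lemma good_with_both:
  assumes "S \<subseteq> U"
  shows "good (S \<union> {a, b}) \<longleftrightarrow> chosen S"
proof -
  have "(S \<union> {a, b}) \<inter> U = S" using assms a_notin_U b_notin_U by auto
  then show ?thesis unfolding good_def by simp
qed

lemma good_with_neither:
  assumes "S \<subseteq> U"
  shows "good S \<longleftrightarrow> \<not> chosen (U - S)"
  using assms a_notin_U b_notin_U unfolding good_def by auto

lemma good_complement:
  assumes "F \<subseteq> U \<union> {a, b}"
  shows "good (U \<union> {a, b} - F) \<longleftrightarrow> \<not> good F"
proof -
  let ?G = "U \<union> {a, b}"
  have ab: "a \<in> ?G - F \<longleftrightarrow> a \<notin> F" "b \<in> ?G - F \<longleftrightarrow> b \<notin> F" by auto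
  have U_parts: "U - (?G - F) = F \<inter> U" "(?G - F) \<inter> U = U - F" by auto
  have "(?G - F) \<inter> W = (U - F \<inter> U) \<inter> W" "F \<inter> W = (F \<inter> U) \<inter> W"
    using W_subset a_notin_U b_notin_U by auto
  then have W_parts: "card ((?G - F) \<inter> W) = k - card (F \<inter> W)"
    using card_Int_W_complement[of "F \<inter> U"] by simp
  have "card (F \<inter> W) \<le> k" using card_mono[OF finite_W, of "F \<inter> W"] card_W by auto
  then have "odd (card ((?G - F) \<inter> W)) \<longleftrightarrow> \<not> odd (card (F \<inter> W))"
    using W_parts odd_k by presburger
  then show ?thesis unfolding good_def ab U_parts by auto
qed

lemma even_family_complement_free: "complement_free (U \<union> {a, b}) even_family"
  unfolding complement_free_def even_family_def binom_sets_def
  using good_complement by blast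

lemma insert_in_even_family:
  assumes "F \<in> odd_family" "x \<in> {a, b}"
  shows "insert x F \<in> even_family"
proof -
  have F: "F \<subseteq> U" "card F = k" "odd (card (F \<inter> W))"
    using assms(1) unfolding odd_family_def binom_sets_def by auto
  moreover have "x \<notin> F" using F(1) assms(2) a_notin_U b_notin_U by auto
  moreover have "finite F" using F(1) finite_U finite_subset by blast
  ultimately show ?thesis
    using assms(2) good_insert unfolding even_family_def binom_sets_def by auto
qed

lemma diff_family_one_extra:
  assumes "D \<subseteq> U" "card D < k" "x \<in> {a, b}" "y \<in> {a, b}"
  shows "D \<union> ({x} - {y}) \<in> diff_family even_family"
proof -
  obtain F1 F2 where F: "F1 \<in> odd_family" "F2 \<in> odd_family" "F1 - F2 = D"
    using odd_family_diff_cover[OF assms(1,2)] unfolding diff_family_def by blast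
  have "F1 \<subseteq> U" "F2 \<subseteq> U" using F(1,2) unfolding odd_family_def binom_sets_def by auto
  then have "insert x F1 - insert y F2 = D \<union> ({x} - {y})"
    using F(3) assms(3,4) a_notin_U b_notin_U by auto
  moreover have "insert x F1 \<in> even_family" "insert y F2 \<in> even_family"
    using insert_in_even_family F(1,2) assms(3,4) by auto
  ultimately show ?thesis unfolding diff_family_def by blast
qed

lemma diff_family_both_extra:
  assumes D: "D \<subseteq> U" "card D \<le> k - 2"
  shows "D \<union> {a, b} \<in> diff_family even_family"
proof -
  obtain A E where AE: "A \<subseteq> U - D" "E \<subseteq> U - D" "A \<inter> E = {}"
      "card A = k - 1 - card D" "card E = k - 1 - card D" "chosen (D \<union> A)" "\<not> chosen (D \<union> E)"
    by (rule chosen_both_ways[OF D])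
  have fin: "finite D" "finite A" "finite E"
    using D(1) AE(1,2) finite_U finite_subset by blast+
  have sub: "D \<union> A \<subseteq> U" "D \<union> E \<subseteq> U" using D(1) AE(1,2) by auto
  have card_DA: "card (D \<union> A) = k - 1" using AE(1,4) fin D(2) by (subst card_Un_disjoint) auto
  have card_DE: "card (D \<union> E) = k - 1" using AE(2,5) fin D(2) by (subst card_Un_disjoint) auto
  define F1 where "F1 = (D \<union> A) \<union> {a, b}"
  define F2 where "F2 = U - (D \<union> E)"
  have F2_sub: "F2 \<subseteq> U" and U_F2: "U - F2 = D \<union> E" unfolding F2_def using sub(2) by auto
  have "card F1 = k + 1"
    using card_DA sub(1) fin a_notin_U b_notin_U a_neq_b k_ge_3
    unfolding F1_def by (subst card_Un_disjoint) auto
  moreover have "card F2 = card U - card (D \<union> E)"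
    unfolding F2_def using sub(2) finite_U by (meson card_Diff_subset finite_subset)
  then have "card F2 = k + 1" using card_DE card_U k_ge_3 by simp
  moreover have "good F1" unfolding F1_def using good_with_both[OF sub(1)] AE(6) by simp
  moreover have "good F2" using good_with_neither[OF F2_sub] U_F2 AE(7) by simp
  moreover have "F1 \<subseteq> U \<union> {a, b}" "F2 \<subseteq> U \<union> {a, b}" unfolding F1_def using sub(1) F2_sub by auto
  ultimately have "F1 \<in> even_family" "F2 \<in> even_family"
    unfolding even_family_def binom_sets_def by auto
  moreover have "F1 - F2 = D \<union> {a, b}"
    using sub AE(1,3) a_notin_U b_notin_U unfolding F1_def F2_def by auto
  ultimately show ?thesis unfolding diff_family_def by blast
qed

lemma diff_family_of_card_k:
  assumes D: "D \<subseteq> U" "card D = k"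
  shows "D \<in> diff_family even_family"
proof -
  define E where "E = U - D"
  have E: "E \<subseteq> U" "card E = k" "D = U - E"
    using D finite_U card_U finite_subset[OF D(1) finite_U] unfolding E_def
    by (auto simp: card_Diff_subset)
  obtain y where y: "y \<in> E" "chosen (E - {y}) \<noteq> odd (card (E \<inter> W))"
    by (rule chosen_deletion[OF E(1,2)])
  have fin: "finite D" "finite E" using D(1) E(1) finite_U finite_subset by blast+
  have yD: "y \<notin> D" "y \<in> U" using y(1) unfolding E_def by auto
  show ?thesis
  proof (cases "odd (card (E \<inter> W))")
    case True
    have "U - insert y D = E - {y}" unfolding E_def by auto
    then have "insert y D \<in> even_family"
      using good_with_neither[of "insert y D"] y True yD D fin a_notin_U b_notin_U
      unfolding even_family_def binom_sets_def by auto
    moreover have "b \<notin> E" using E(1) b_notin_U by auto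
    then have "insert b E \<in> even_family"
      using good_insert[OF E(1), of b] True E fin b_notin_U
      unfolding even_family_def binom_sets_def by auto
    moreover have "insert y D - insert b E = D" using y(1) D(1) b_notin_U unfolding E_def by auto
    ultimately show ?thesis unfolding diff_family_def by blast
  next
    case False
    have "card (E \<inter> W) \<le> k" using card_mono[OF finite_W, of "E \<inter> W"] card_W by auto
    then have "odd (card (D \<inter> W))"
      using False card_Int_W_complement[OF E(1)] E(3) odd_k by presburger
    moreover have "a \<notin> D" using D(1) a_notin_U by auto
    ultimately have "insert a D \<in> even_family"
      using good_insert[OF D(1), of a] D fin a_notin_U
      unfolding even_family_def binom_sets_def by auto
    moreover have "card (E - {y}) = k - 1" "E - {y} \<subseteq> U" using y(1) E fin by auto
    then have "(E - {y}) \<union> {a, b} \<in> even_family"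
      using good_with_both[of "E - {y}"] y False fin a_notin_U b_notin_U a_neq_b k_ge_3
      unfolding even_family_def binom_sets_def by (auto simp: card_insert_if)
    moreover have "insert a D - ((E - {y}) \<union> {a, b}) = D" unfolding E_def using D(1) a_notin_U b_notin_U by auto
    ultimately show ?thesis unfolding diff_family_def by blast
  qed
qed

lemma even_family_diff_cover:
  assumes D: "D \<subseteq> U \<union> {a, b}" "card D \<le> k"
  shows "D \<in> diff_family even_family"
proof -
  define D' where "D' = D - {a, b}"
  have D': "D' \<subseteq> U" using D(1) unfolding D'_def by auto
  have fD: "finite D" using D(1) finite_U finite_subset by blast
  consider (neither) "a \<notin> D" "b \<notin> D" | (only_a) "a \<in> D" "b \<notin> D"
    | (only_b) "a \<notin> D" "b \<in> D" | (both) "a \<in> D" "b \<in> D" by blast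
  then show ?thesis
  proof cases
    case neither
    then have "D = D'" unfolding D'_def by auto
    show ?thesis
    proof (cases "card D < k")
      case True
      then show ?thesis using diff_family_one_extra[OF D', of a a] \<open>D = D'\<close> by simp
    next
      case False
      then show ?thesis using diff_family_of_card_k[OF D'] \<open>D = D'\<close> D(2) by simp
    qed
  next
    case only_a
    then have "D' = D - {a}" unfolding D'_def by auto
    moreover have "card D > 0" using only_a fD card_gt_0_iff by blast
    ultimately have "card D' < k" using only_a fD D(2) by (simp add: card_Diff_singleton)
    moreover have "D = D' \<union> ({a} - {b})" using \<open>D' = D - {a}\<close> only_a a_neq_b by auto
    ultimately show ?thesis using diff_family_one_extra[OF D', of a b] by simp
  next
    case only_b
    then have "D' = D - {b}" unfolding D'_def by auto
    moreover have "card D > 0" using only_b fD card_gt_0_iff by blast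
    ultimately have "card D' < k" using only_b fD D(2) by (simp add: card_Diff_singleton)
    moreover have "D = D' \<union> ({b} - {a})" using \<open>D' = D - {b}\<close> only_b a_neq_b by auto
    ultimately show ?thesis using diff_family_one_extra[OF D', of b a] by simp
  next
    case both
    then have "D = D' \<union> {a, b}" "card D' \<le> k - 2"
      using fD D(2) a_neq_b unfolding D'_def by (auto simp: card_Diff_subset)
    then show ?thesis using diff_family_both_extra[OF D'] by simp
  qed
qed

end


lemma binom_sets_mono: "S \<subseteq> T \<Longrightarrow> binom_sets S j \<subseteq> binom_sets T j"
  unfolding binom_sets_def by auto

lemma exists_complement_free_cover:
  fixes k :: nat
  assumes "3 \<le> k"
  obtains \<F> where "\<F> \<subseteq> binom_sets {1..2*k} k" "complement_free {1..2*k} \<F>"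
    "\<And>D. D \<subseteq> {1..2*k} \<Longrightarrow> card D < k \<Longrightarrow> D \<in> diff_family \<F>"
proof (cases "odd k")
  case True
  have "{1..2*k} - {1..k} = {k+1..2*k}" by auto
  then interpret odd_halves "{1..2*k}" "{1..k}" k
    using True by unfold_locales auto
  show thesis
    using that[of odd_family] odd_family_complement_free odd_family_diff_cover
    unfolding odd_family_def by auto
next
  case False
  define m where "m = k - 1"
  have m: "odd m" "3 \<le> m" "k = m + 1"
    using False assms unfolding m_def by presburger+
  have "{1..2*m} - {1..m} = {m+1..2*m}" by auto
  then interpret even_extension "{1..2*m}" "{1..m}" m 1 "m+1" "2*m+1" "2*m+2"
    using m by unfold_locales auto
  have ground: "{1..2*m} \<union> {2*m+1, 2*m+2} = {1..2*k}" using m(3) by auto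
  show thesis
  proof (rule that)
    show "even_family \<subseteq> binom_sets {1..2*k} k"
      unfolding even_family_def ground m(3) by auto
    show "complement_free {1..2*k} even_family"
      using even_family_complement_free unfolding ground .
    show "D \<in> diff_family even_family" if "D \<subseteq> {1..2*k}" "card D < k" for D
      using even_family_diff_cover[of D] that unfolding ground m(3) by simp
  qed
qed

theorem corollary1:
  fixes k t :: nat
  assumes "k \<ge> 3" and "1 \<le> t" and "t \<le> k - 1"
  shows "\<exists>\<F>. \<F> \<subseteq> binom_sets {1..2*k - t + 1} k \<and> t_intersecting t \<F> \<and>
           (\<Union>j\<in>{0..k - t}. binom_sets {1..2*k - 2*t + 2} j) \<subseteq> diff_family \<F>"
proof (cases "t = 1")
  case True
  obtain \<F> where \<F>: "\<F> \<subseteq> binom_sets {1..2*k} k" "complement_free {1..2*k} \<F>"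
      "\<And>D. D \<subseteq> {1..2*k} \<Longrightarrow> card D < k \<Longrightarrow> D \<in> diff_family \<F>"
    using exists_complement_free_cover[OF assms(1)] by blast
  have ground: "2*k - t + 1 = 2*k" "2*k - 2*t + 2 = 2*k" using True assms(1) by auto
  show ?thesis
  proof (intro exI conjI)
    show "\<F> \<subseteq> binom_sets {1..2*k - t + 1} k" using \<F>(1) unfolding ground .
    show "t_intersecting t \<F>"
      using t_intersecting_if_complement_free[OF _ _ \<F>(1,2)] True by simp
    show "(\<Union>j\<in>{0..k - t}. binom_sets {1..2*k - 2*t + 2} j) \<subseteq> diff_family \<F>"
      using \<F>(3) True assms(1) unfolding ground binom_sets_def by auto
  qed
next
  case False
  define V where "V = {1..2*k - t}"
  have cover: "binom_sets {1..2*k - 2*t + 2} j \<subseteq> diff_family (binom_sets V k)"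
    if "j \<le> k - t" for j
  proof -
    have sub: "{1..2*k - 2*t + 2} \<subseteq> V" and size: "j \<le> k" "j + k \<le> card V"
      using that False assms unfolding V_def by auto
    have "finite V" unfolding V_def by simp
    from subset_trans[OF binom_sets_mono[OF sub] binom_sets_subset_diff_family[OF this size]]
    show ?thesis .
  qed
  show ?thesis
  proof (intro exI conjI)
    show "binom_sets V k \<subseteq> binom_sets {1..2*k - t + 1} k"
      by (rule binom_sets_mono) (auto simp: V_def)
    show "t_intersecting t (binom_sets V k)"
      using t_intersecting_binom_sets[of V k] False assms unfolding V_def by simp
    show "(\<Union>j\<in>{0..k - t}. binom_sets {1..2*k - 2*t + 2} j) \<subseteq> diff_family (binom_sets V k)"
      using cover by (intro UN_least) simp
  qed
qed

end
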